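(* Let $N,d\in\mathbb{N}^*$, $\alpha>0$, let $A\in\mathbb{R}_+^{N\times N}$ and let $\psi:\mathbb{R}_+\to\mathbb{R}_+$ satisfy $(r_1-r_2)(\psi(r_1)-\psi(r_2))\le0$ for all $r_1,r_2\ge0$ and $0<\psi(r)\le\psi(0)\le1$ for all $r\ge0$. Assume that the directed graph on $\{1,\dots,N\}$ with an edge $i\to j$ iff $i\ne j$ and $A_{ij}>0$ is irreducible (for all $i,j$ there is a path from $i$ to $j$), and that there is a probability measure $\pi$ on $\{1,\dots,N\}$ with $\pi_iA_{ij}=\pi_jA_{ji}$ for all $i\ne j$. Let $(x_i,v_i)_{i}$ be a solution on $\mathbb{R}_+$ of $$\frac{dx_i}{dt}=v_i,\qquad \frac{dv_i}{dt}=\alpha\sum_{j\ne i}A_{ij}\psi(\|x_j-x_i\|_2)(v_j-v_i).$$ Let $\pi^*=\inf_i\pi_i$, $v^*=\sum_{i=1}^N\pi_iv_i(0)$, $\widetilde V(0)=\sqrt{\sum_{i=1}^N\pi_i\|v_i(0)-v^*\|_2^2}$, $X(0)=\sup_{i,j}\|x_i(0)-x_j(0)\|_2$, and let $c_P$ be the Poincaré constant of $A$. If $$\widetilde V(0)<\frac{\alpha c_P\sqrt{\pi^*}}{2}\int_{X(0)}^{+\infty}\psi(r)\,dr,$$ then the solution flocks, i.e. $\sup_{t\ge0}X(t)<+\infty$ and $V(t)\to0$ as $t\to+\infty$, where $X(t)=\sup_{i,j}\|x_i(t)-x_j(t)\|_2$ and $V(t)=\sup_{i,j}\|v_i(t)-v_j(t)\|_2$;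 furthermore $v_i(t)\to v^*$ as $t\to+\infty$ for all $i$.
   Context: For $h:\{1,\dots,N\}\to\mathbb{R}$, $\mathcal{E}(h)=\frac12\sum_{i,j=1}^N(h(i)-h(j))^2\pi_iA_{ij}$ and $\mathbb{V}_\pi(h)=\sum_i\pi_i(h(i)-\pi(h))^2$ with $\pi(h)=\sum_i\pi_ih(i)$. The Poincaré constant is $c_P=\inf\{\mathcal{E}(h)/\mathbb{V}_\pi(h)\,:\,h:\{1,\dots,N\}\to\mathbb{R},\ \mathbb{V}_\pi(h)>0\}$ (it is positive under the assumptions; it equals the smallest positive eigenvalue of the Laplacian $D-A$, $D=\mathrm{diag}(\sum_kA_{ik})$). $\|\cdot\|_2$ is the Euclidean norm. *)

theory Defs
  imports "HOL-Analysis.Analysis"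
begin

definition pi_mean :: "('n::finite \<Rightarrow> real) \<Rightarrow> ('n \<Rightarrow> real) \<Rightarrow> real" where
  "pi_mean p h = (\<Sum>i\<in>UNIV. p i * h i)"

definition pi_variance :: "('n::finite \<Rightarrow> real) \<Rightarrow> ('n \<Rightarrow> real) \<Rightarrow> real" where
  "pi_variance p h = (\<Sum>i\<in>UNIV. p i * (h i - pi_mean p h)\<^sup>2)"

definition dirichlet_form ::
  "('n::finite \<Rightarrow> 'n \<Rightarrow> real) \<Rightarrow> ('n \<Rightarrow> real) \<Rightarrow> ('n \<Rightarrow> real) \<Rightarrow> real" where
  "dirichlet_form A p h = (1/2) * (\<Sum>i\<in>UNIV. \<Sum>j\<in>UNIV. (h i - h j)\<^sup>2 * p i * A i j)"

definition poincare_const ::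
  "('n::finite \<Rightarrow> 'n \<Rightarrow> real) \<Rightarrow> ('n \<Rightarrow> real) \<Rightarrow> real" where
  "poincare_const A p =
     Inf {dirichlet_form A p h / pi_variance p h | h. pi_variance p h > 0}"

definition graph_edges :: "('n \<Rightarrow> 'n \<Rightarrow> real) \<Rightarrow> ('n \<times> 'n) set" where
  "graph_edges A = {(i, j). i \<noteq> j \<and> A i j > 0}"

definition irreducible_graph :: "('n \<Rightarrow> 'n \<Rightarrow> real) \<Rightarrow> bool" where
  "irreducible_graph A \<longleftrightarrow> (\<forall>i j. (i, j) \<in> (graph_edges A)\<^sup>*)"

definition diam_fam :: "('n::finite \<Rightarrow> 'a::real_normed_vector) \<Rightarrow> real" where
  "diam_fam y = Max {norm (y i - y j) | i j. True}"

end

(*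
  Let V(t) be the pi-variance of the velocities, pi_min = min_i pi_i, and Psi(y) the integral
  of psi from X(0) to y.  By reversibility the pi-mean velocity is conserved and V decreases;
  the Poincare inequality gives d/dt sqrt V <= - alpha c_P psi(X) sqrt V, while the position
  diameter X grows at most at the rate max |v_i - v_j| <= 2 sqrt (V / pi_min).  Hence, with
  C = alpha c_P sqrt pi_min / 2, the functional sqrt V(t) + C Psi(X(t)) is nonincreasing, so
  C Psi(X(t)) <= sqrt V(0), which by the smallness hypothesis lies below C times the whole tail
  integral of psi: X stays bounded by some R.  Then dV/dt <= - 2 alpha c_P psi(R) V, and V
  decays exponentially.
*)
theory Submission
  imports Defs
begin

lemma right_dini_nonpos_imp_nonincreasing:
  fixes f :: "real \<Rightarrow> real"
  assumes "a \<le> b" and cont: "continuous_on {a..b} f"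
    and dini: "\<And>t e. t \<in> {a..<b} \<Longrightarrow> e > 0 \<Longrightarrow>
                 eventually (\<lambda>s. f s \<le> f t + e * (s - t)) (at_right t)"
  shows "f b \<le> f a"
proof -
  have slack: "f b \<le> f a + e * (b - a)" if e: "e > 0" for e
  proof -
    define g where "g u = f u - e * (u - a)" for u
    define T where "T = {s \<in> {a..b}. g s \<le> g a}"
    have "continuous_on {a..b} g" unfolding g_def by (intro continuous_intros cont)
    then have "closed T" unfolding T_def by (intro continuous_on_closed_Collect_le) auto
    moreover have "a \<in> T" using \<open>a \<le> b\<close> by (simp add: T_def)
    moreover have "bdd_above T" by (auto simp: T_def bdd_above_def)
    ultimately have sup_in: "Sup T \<in> T" by (intro closed_contains_Sup) auto
    have "Sup T = b"
    proof (rule ccontr)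
      assume "Sup T \<noteq> b"
      with sup_in have c: "Sup T \<in> {a..<b}" by (auto simp: T_def)
      obtain d where d: "d > Sup T" "\<And>s. Sup T < s \<Longrightarrow> s < d \<Longrightarrow> f s \<le> f (Sup T) + e * (s - Sup T)"
        using dini[OF c e] by (auto simp: eventually_at_right_field)
      define s where "s = (Sup T + min b d) / 2"
      have s: "Sup T < s" "s < b" "s < d" using c d(1) by (auto simp: s_def)
      then have "g s \<le> g (Sup T)" using d(2)[of s] by (simp add: g_def algebra_simps)
      with sup_in s c have "s \<in> T" by (auto simp: T_def)
      then have "s \<le> Sup T" using \<open>bdd_above T\<close> by (rule cSup_upper)
      with s show False by simp
    qed
    with sup_in have "g b \<le> g a" by (simp add: T_def)
    then show ?thesis by (simp add: g_def algebra_simps)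
  qed
  show ?thesis
  proof (rule field_le_epsilon)
    fix e :: real assume "e > 0"
    have "f b \<le> f a + e / (b - a + 1) * (b - a)" using \<open>a \<le> b\<close> \<open>e > 0\<close> by (intro slack) auto
    also have "e / (b - a + 1) * (b - a) \<le> e" using \<open>a \<le> b\<close> \<open>e > 0\<close> by (simp add: field_simps)
    finally show "f b \<le> f a + e" by simp
  qed
qed

lemma has_vector_derivative_at_right_remainder:
  fixes f :: "real \<Rightarrow> 'a::real_normed_vector"
  assumes "(f has_vector_derivative D) (at_right t)" and "e > 0"
  shows "eventually (\<lambda>s. norm (f s - f t - (s - t) *\<^sub>R D) \<le> e * (s - t)) (at_right t)"
proof -
  have "((\<lambda>s. norm (f s - f t - (s - t) *\<^sub>R D) / norm (s - t)) \<longlongrightarrow> 0) (at_right t)"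
    using assms(1) unfolding has_vector_derivative_def has_derivative_iff_norm by auto
  then have "eventually (\<lambda>s. norm (f s - f t - (s - t) *\<^sub>R D) / norm (s - t) < e) (at_right t)"
    using assms(2) by (auto dest: order_tendstoD)
  with eventually_at_right_less[of t] show ?thesis
    by eventually_elim (simp add: field_simps)
qed

lemma has_vector_derivative_at_right_norm_le:
  fixes f :: "real \<Rightarrow> 'a::real_normed_vector"
  assumes "(f has_vector_derivative D) (at_right t)" and "norm D < B"
  shows "eventually (\<lambda>s. norm (f s - f t) \<le> (s - t) * B) (at_right t)"
proof -
  have "B - norm D > 0" using assms(2) by simp
  from has_vector_derivative_at_right_remainder[OF assms(1) this] eventually_at_right_less[of t]
  show ?thesis
  proof eventually_elim
    case (elim s)
    have "norm (f s - f t) \<le> norm (f s - f t - (s - t) *\<^sub>R D) + norm ((s - t) *\<^sub>R D)"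
      by (metis norm_triangle_ineq diff_add_cancel)
    also have "\<dots> \<le> (B - norm D) * (s - t) + (s - t) * norm D"
      using elim by simp
    also have "\<dots> = (s - t) * B" by (simp add: algebra_simps)
    finally show ?case .
  qed
qed

lemma has_real_derivative_at_right_le:
  fixes f :: "real \<Rightarrow> real"
  assumes "(f has_real_derivative D) (at_right t)" and "D < B"
  shows "eventually (\<lambda>s. f s \<le> f t + (s - t) * B) (at_right t)"
proof -
  have "(f has_vector_derivative D) (at_right t)" "B - D > 0"
    using assms by (simp_all add: has_real_derivative_iff_has_vector_derivative)
  from has_vector_derivative_at_right_remainder[OF this] show ?thesis
    by (rule eventually_mono) (simp add: abs_le_iff algebra_simps)
qed

lemma has_real_derivative_nonpos_imp_nonincreasing_atLeast:
  fixes f :: "real \<Rightarrow> real"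
  assumes deriv: "\<And>t. a \<le> t \<Longrightarrow> (f has_real_derivative f' t) (at t within {a..})"
    and nonpos: "\<And>t. a \<le> t \<Longrightarrow> f' t \<le> 0" and "a \<le> b"
  shows "f b \<le> f a"
proof (rule DERIV_nonpos_imp_decreasing_open[OF \<open>a \<le> b\<close>])
  fix t assume "a < t" "t < b"
  then have "at t within {a..} = at t" by (intro at_within_interior) auto
  with deriv nonpos \<open>a < t\<close> show "\<exists>y. DERIV f t :> y \<and> y \<le> 0" by (metis less_imp_le)
next
  have "continuous_on {a..} f" using deriv by (intro DERIV_continuous_on) auto
  then show "continuous_on {a..b} f" by (rule continuous_on_subset) auto
qed

lemma continuous_Max:
  fixes f :: "'i \<Rightarrow> 'a::t2_space \<Rightarrow> 'b::linorder_topology"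
  assumes "finite I" "I \<noteq> {}" "\<And>i. i \<in> I \<Longrightarrow> continuous F (f i)"
  shows "continuous F (\<lambda>x. Max ((\<lambda>i. f i x) ` I))"
  using assms
proof (induction I rule: finite_ne_induct)
  case (singleton i)
  then show ?case by simp
next
  case (insert i I)
  then show ?case by (simp add: continuous_max)
qed

lemma diam_fam_le_iff:
  fixes y :: "'n::finite \<Rightarrow> 'a::real_normed_vector"
  shows "diam_fam y \<le> B \<longleftrightarrow> (\<forall>i j. norm (y i - y j) \<le> B)"
proof -
  have "{norm (y i - y j) | i j. True} = (\<lambda>(i, j). norm (y i - y j)) ` UNIV" by auto
  then show ?thesis unfolding diam_fam_def by (subst Max_le_iff) auto
qed

lemma norm_le_diam_fam:
  fixes y :: "'n::finite \<Rightarrow> 'a::real_normed_vector"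
  shows "norm (y i - y j) \<le> diam_fam y"
  using diam_fam_le_iff[of y "diam_fam y"] by simp

lemma diam_fam_nonneg: "0 \<le> diam_fam (y :: 'n::finite \<Rightarrow> 'a::real_normed_vector)"
  using norm_le_diam_fam[of y undefined undefined] by simp

lemma continuous_diam_fam:
  fixes y :: "'b::t2_space \<Rightarrow> 'n::finite \<Rightarrow> 'a::real_normed_vector"
  assumes "\<And>i. continuous F (\<lambda>s. y s i)"
  shows "continuous F (\<lambda>s. diam_fam (y s))"
proof -
  have "diam_fam (y s) = Max ((\<lambda>(i, j). norm (y s i - y s j)) ` UNIV)" for s
    unfolding diam_fam_def by (rule arg_cong[where f = Max]) auto
  moreover have "continuous F (\<lambda>s. Max ((\<lambda>(i, j). norm (y s i - y s j)) ` UNIV))"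
    using assms by (intro continuous_Max) (auto split: prod.split intro!: continuous_intros)
  ultimately show ?thesis by simp
qed

lemma antimono_on_if_diff_mult_diff_nonpos:
  fixes \<psi> :: "real \<Rightarrow> real"
  assumes "\<And>r1 r2. r1 \<ge> 0 \<Longrightarrow> r2 \<ge> 0 \<Longrightarrow> (r1 - r2) * (\<psi> r1 - \<psi> r2) \<le> 0"
  shows "antimono_on {0..} \<psi>"
proof (rule monotone_onI)
  fix r s :: real assume "r \<in> {0..}" "s \<in> {0..}" "r \<le> s"
  with assms[of r s] show "\<psi> s \<le> \<psi> r"
    by (cases "r = s") (auto simp: mult_le_0_iff)
qed

text \<open>Note that \<open>primitive \<psi> a y = 0\<close> for \<open>y < a\<close>.\<close>
definition primitive :: "(real \<Rightarrow> real) \<Rightarrow> real \<Rightarrow> real \<Rightarrow> real" where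
  "primitive \<psi> a y = enn2real (\<integral>\<^sup>+ r \<in> {a..y}. ennreal (\<psi> r) \<partial>lborel)"

locale antimono_kernel =
  fixes \<psi> :: "real \<Rightarrow> real"
  assumes antimono: "antimono_on {0..} \<psi>"
    and nonneg: "\<And>r. 0 \<le> r \<Longrightarrow> 0 \<le> \<psi> r"
begin

lemma antimonoD: "0 \<le> r \<Longrightarrow> r \<le> s \<Longrightarrow> \<psi> s \<le> \<psi> r"
  using monotone_onD[OF antimono] by auto

lemma borel_measurable_indicator:
  assumes "S \<subseteq> {0..}" "S \<in> sets borel"
  shows "(\<lambda>r. ennreal (\<psi> r) * indicator S r) \<in> borel_measurable lborel"
proof -
  \<comment> \<open>\<open>\<psi>\<close> is only antitone on \<open>[0, \<infinity>)\<close>; extended by \<open>\<psi> 0\<close> to the left it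
    is antitone everywhere.\<close>
  have "mono (\<lambda>r. - \<psi> (max 0 r))"
    by (auto simp: mono_def intro!: antimonoD)
  then have "(\<lambda>r. - \<psi> (max 0 r)) \<in> borel_measurable borel"
    by (rule borel_measurable_mono)
  then have "(\<lambda>r. - (- \<psi> (max 0 r))) \<in> borel_measurable borel"
    by measurable
  then have "(\<lambda>r. ennreal (\<psi> (max 0 r)) * indicator S r) \<in> borel_measurable borel"
    using assms(2) by simp measurable
  moreover have "ennreal (\<psi> (max 0 r)) * indicator S r = ennreal (\<psi> r) * indicator S r" for r
    using assms(1) by (cases "r \<in> S") (auto simp: max_def)
  ultimately show ?thesis by simp
qed

lemma nn_integral_Icc_le_add:
  assumes "0 \<le> a" "b \<le> c"
  shows "(\<integral>\<^sup>+ r \<in> {a..c}. ennreal (\<psi> r) \<partial>lborel)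
           \<le> (\<integral>\<^sup>+ r \<in> {a..b}. ennreal (\<psi> r) \<partial>lborel) + ennreal (\<psi> (max a b) * (c - b))"
proof -
  have "(\<integral>\<^sup>+ r \<in> {a..c}. ennreal (\<psi> r) \<partial>lborel)
      \<le> (\<integral>\<^sup>+ r. ennreal (\<psi> r) * indicator {a..b} r + ennreal (\<psi> (max a b)) * indicator {b<..c} r \<partial>lborel)"
  proof (intro nn_integral_mono)
    fix r
    have "\<psi> r \<le> \<psi> (max a b)" if "a \<le> r" "b < r" using that assms by (intro antimonoD) auto
    then show "ennreal (\<psi> r) * indicator {a..c} r
        \<le> ennreal (\<psi> r) * indicator {a..b} r + ennreal (\<psi> (max a b)) * indicator {b<..c} r"
      by (auto simp: indicator_def ennreal_leI)
  qed
  also have "\<dots> = (\<integral>\<^sup>+ r \<in> {a..b}. ennreal (\<psi> r) \<partial>lborel)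
                 + (\<integral>\<^sup>+ r. ennreal (\<psi> (max a b)) * indicator {b<..c} r \<partial>lborel)"
    using assms by (intro nn_integral_add borel_measurable_indicator) auto
  also have "(\<integral>\<^sup>+ r. ennreal (\<psi> (max a b)) * indicator {b<..c} r \<partial>lborel) = ennreal (\<psi> (max a b) * (c - b))"
    using assms nonneg[of "max a b"] by (simp add: nn_integral_cmult_indicator ennreal_mult)
  finally show ?thesis .
qed

lemma ennreal_primitive:
  assumes "0 \<le> a"
  shows "ennreal (primitive \<psi> a y) = (\<integral>\<^sup>+ r \<in> {a..y}. ennreal (\<psi> r) \<partial>lborel)"
proof -
  have "(\<integral>\<^sup>+ r \<in> {a..y}. ennreal (\<psi> r) \<partial>lborel)
      \<le> (\<integral>\<^sup>+ r \<in> {a..min y (a - 1)}. ennreal (\<psi> r) \<partial>lborel) + ennreal (\<psi> a * (y - min y (a - 1)))"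
    using nn_integral_Icc_le_add[OF assms, of "min y (a - 1)" y] by (simp add: max_def)
  also have "\<dots> < top" by simp
  finally show ?thesis by (simp add: primitive_def ennreal_enn2real_if less_top)
qed

lemma primitive_nonneg: "0 \<le> primitive \<psi> a y"
  by (simp add: primitive_def)

lemma primitive_mono:
  assumes "0 \<le> a" "y \<le> z"
  shows "primitive \<psi> a y \<le> primitive \<psi> a z"
proof -
  have "(\<integral>\<^sup>+ r \<in> {a..y}. ennreal (\<psi> r) \<partial>lborel) \<le> (\<integral>\<^sup>+ r \<in> {a..z}. ennreal (\<psi> r) \<partial>lborel)"
    using assms by (intro nn_integral_mono) (auto simp: indicator_def)
  then show ?thesis using assms primitive_nonneg by (simp flip: ennreal_primitive)
qed

lemma primitive_base: "primitive \<psi> a a = 0"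
proof -
  have "(\<integral>\<^sup>+ r \<in> {a..a}. ennreal (\<psi> r) \<partial>lborel) = (\<integral>\<^sup>+ r. ennreal (\<psi> a) * indicator {a..a} r \<partial>lborel)"
    by (intro nn_integral_cong) (auto simp: indicator_def)
  then show ?thesis by (simp add: primitive_def nn_integral_cmult_indicator)
qed

lemma primitive_le_add:
  assumes "0 \<le> a" "b \<le> c"
  shows "primitive \<psi> a c \<le> primitive \<psi> a b + \<psi> (max a b) * (c - b)"
proof -
  have nonneg_step: "0 \<le> \<psi> (max a b) * (c - b)" using assms nonneg[of "max a b"] by simp
  have "ennreal (primitive \<psi> a c) \<le> ennreal (primitive \<psi> a b) + ennreal (\<psi> (max a b) * (c - b))"
    using nn_integral_Icc_le_add[OF assms] by (simp flip: ennreal_primitive[OF assms(1)])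
  also have "\<dots> = ennreal (primitive \<psi> a b + \<psi> (max a b) * (c - b))"
    using nonneg_step primitive_nonneg by (simp add: ennreal_plus)
  finally show ?thesis
    using nonneg_step primitive_nonneg by (subst (asm) ennreal_le_iff) auto
qed

lemma primitive_le_add_max:
  assumes "0 \<le> a" "0 \<le> b"
  shows "primitive \<psi> a c \<le> primitive \<psi> a b + \<psi> b * max 0 (c - b)"
proof (cases "b \<le> c")
  case True
  have "\<psi> (max a b) * (c - b) \<le> \<psi> b * (c - b)"
    using True assms by (intro mult_right_mono antimonoD) auto
  with primitive_le_add[OF assms(1) True] show ?thesis using True by simp
next
  case False
  then show ?thesis using primitive_mono[OF assms(1), of c b] by simp
qed

lemma continuous_on_primitive:
  assumes "0 \<le> a"
  shows "continuous_on UNIV (primitive \<psi> a)"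
proof (rule lipschitz_on_continuous_on)
  have le: "primitive \<psi> a c \<le> primitive \<psi> a b + \<psi> 0 * (c - b)" if "b \<le> c" for b c
  proof -
    have "\<psi> (max a b) * (c - b) \<le> \<psi> 0 * (c - b)"
      using that assms by (intro mult_right_mono antimonoD) auto
    with primitive_le_add[OF assms that] show ?thesis by simp
  qed
  show "(\<psi> 0)-lipschitz_on UNIV (primitive \<psi> a)"
  proof (rule lipschitz_onI)
    fix b c :: real
    show "dist (primitive \<psi> a b) (primitive \<psi> a c) \<le> \<psi> 0 * dist b c"
      using le[of b c] le[of c b] primitive_mono[OF assms, of b c] primitive_mono[OF assms, of c b]
      by (cases "b \<le> c") (auto simp: dist_real_def abs_if algebra_simps)
  qed (simp add: nonneg)
qed

lemma nn_integral_atLeast_eq_SUP_primitive: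
  assumes "0 \<le> a"
  shows "(\<integral>\<^sup>+ r \<in> {a..}. ennreal (\<psi> r) \<partial>lborel) = (SUP n. ennreal (primitive \<psi> a (a + real n)))"
proof -
  have "(\<integral>\<^sup>+ r \<in> {a..}. ennreal (\<psi> r) \<partial>lborel)
      = (\<integral>\<^sup>+ r. (SUP n. ennreal (\<psi> r) * indicator {a..a + real n} r) \<partial>lborel)"
  proof (intro nn_integral_cong)
    fix r
    obtain n :: nat where "r - a \<le> real n" using real_arch_simple by blast
    then have "indicator {a..} r = (SUP n. indicator {a..a + real n} r :: ennreal)"
      by (intro antisym SUP_least) (auto simp: indicator_def intro!: SUP_upper2[of n])
    then show "ennreal (\<psi> r) * indicator {a..} r = (SUP n. ennreal (\<psi> r) * indicator {a..a + real n} r)"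
      by (simp add: SUP_mult_left_ennreal)
  qed
  also have "(\<integral>\<^sup>+ r. (SUP n. ennreal (\<psi> r) * indicator {a..a + real n} r) \<partial>lborel)
           = (SUP n. \<integral>\<^sup>+ r \<in> {a..a + real n}. ennreal (\<psi> r) \<partial>lborel)"
    using assms
    by (intro nn_integral_monotone_convergence_SUP borel_measurable_indicator)
       (auto simp: incseq_def le_fun_def indicator_def)
  finally show ?thesis by (simp add: ennreal_primitive[OF assms])
qed

end

lemma sum_symmetric_scaleR_diff_eq_0:
  fixes w :: "'n::finite \<Rightarrow> 'n \<Rightarrow> real" and u :: "'n \<Rightarrow> 'a::real_vector"
  assumes sym: "\<And>i j. w i j = w j i"
  shows "(\<Sum>i\<in>UNIV. \<Sum>j\<in>UNIV. w i j *\<^sub>R (u j - u i)) = 0"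
proof -
  define S where "S = (\<Sum>i\<in>UNIV. \<Sum>j\<in>UNIV. w i j *\<^sub>R (u j - u i))"
  have "S = (\<Sum>j\<in>UNIV. \<Sum>i\<in>UNIV. w i j *\<^sub>R (u j - u i))"
    unfolding S_def by (rule sum.swap)
  also have "\<dots> = (\<Sum>j\<in>UNIV. \<Sum>i\<in>UNIV. - (w j i *\<^sub>R (u i - u j)))"
    by (intro sum.cong refl) (metis minus_diff_eq scaleR_minus_right sym)
  also have "\<dots> = - S"
    by (simp add: S_def sum_negf)
  finally have "2 *\<^sub>R S = 0" by (metis add.right_inverse scaleR_2)
  then show ?thesis by (simp add: S_def)
qed

lemma sum_symmetric_inner_diff:
  fixes w :: "'n::finite \<Rightarrow> 'n \<Rightarrow> real" and u :: "'n \<Rightarrow> 'a::real_inner"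
  assumes sym: "\<And>i j. w i j = w j i"
  shows "(\<Sum>i\<in>UNIV. \<Sum>j\<in>UNIV. w i j * (u i \<bullet> (u j - u i)))
           = - (1/2) * (\<Sum>i\<in>UNIV. \<Sum>j\<in>UNIV. w i j * (norm (u j - u i))\<^sup>2)"
proof -
  define S where "S = (\<Sum>i\<in>UNIV. \<Sum>j\<in>UNIV. w i j * (u i \<bullet> (u j - u i)))"
  have "S = (\<Sum>i\<in>UNIV. \<Sum>j\<in>UNIV. w i j * (u j \<bullet> (u i - u j)))"
    unfolding S_def by (subst sum.swap) (simp add: sym)
  then have "2 * S = (\<Sum>i\<in>UNIV. \<Sum>j\<in>UNIV. w i j * (u i \<bullet> (u j - u i)) + w i j * (u j \<bullet> (u i - u j)))"
    by (simp add: sum.distrib S_def)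
  also have "\<dots> = (\<Sum>i\<in>UNIV. \<Sum>j\<in>UNIV. - (w i j * (norm (u j - u i))\<^sup>2))"
    by (intro sum.cong refl)
       (simp add: power2_norm_eq_inner algebra_simps inner_diff_left inner_diff_right inner_commute)
  finally show ?thesis by (simp add: S_def sum_negf)
qed

lemma poincare_const_mult_variance_le:
  fixes A :: "'n::finite \<Rightarrow> 'n \<Rightarrow> real"
  assumes A: "\<And>i j. A i j \<ge> 0" and p: "\<And>i. p i \<ge> 0"
  shows "poincare_const A p * pi_variance p h \<le> dirichlet_form A p h"
proof (cases "pi_variance p h > 0")
  case True
  have "bdd_below {dirichlet_form A p h / pi_variance p h | h. pi_variance p h > 0}"
    using A p by (intro bdd_belowI[of _ 0])
      (auto simp: dirichlet_form_def intro!: divide_nonneg_pos sum_nonneg)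
  then have "poincare_const A p \<le> dirichlet_form A p h / pi_variance p h"
    unfolding poincare_const_def using True by (intro cInf_lower) auto
  then show ?thesis using True by (simp add: field_simps)
next
  case False
  then have "pi_variance p h = 0"
    using p by (simp add: pi_variance_def not_less antisym sum_nonneg)
  then show ?thesis using A p by (simp add: dirichlet_form_def sum_nonneg)
qed

lemma poincare_inequality_euclidean:
  fixes A :: "'n::finite \<Rightarrow> 'n \<Rightarrow> real" and u :: "'n \<Rightarrow> 'a::euclidean_space"
  assumes A: "\<And>i j. A i j \<ge> 0" and p: "\<And>i. p i \<ge> 0"
  shows "2 * poincare_const A p * (\<Sum>i\<in>UNIV. p i * (norm (u i - (\<Sum>k\<in>UNIV. p k *\<^sub>R u k)))\<^sup>2)
           \<le> (\<Sum>i\<in>UNIV. \<Sum>j\<in>UNIV. p i * A i j * (norm (u j - u i))\<^sup>2)"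
proof -
  define h where "h b i = u i \<bullet> b" for b i
  have norm_sq: "(norm z)\<^sup>2 = (\<Sum>b\<in>Basis. (z \<bullet> b)\<^sup>2)" for z :: 'a
    unfolding power2_norm_eq_inner euclidean_inner[of z z] by (simp add: power2_eq_square)
  have mean: "pi_mean p (h b) = (\<Sum>k\<in>UNIV. p k *\<^sub>R u k) \<bullet> b" for b
    by (simp add: pi_mean_def h_def inner_sum_left)
  have "(\<Sum>i\<in>UNIV. p i * (norm (u i - (\<Sum>k\<in>UNIV. p k *\<^sub>R u k)))\<^sup>2)
      = (\<Sum>i\<in>UNIV. \<Sum>b\<in>Basis. p i * (h b i - pi_mean p (h b))\<^sup>2)"
    by (simp add: norm_sq mean h_def inner_diff_left sum_distrib_left)
  also have "\<dots> = (\<Sum>b\<in>Basis. pi_variance p (h b))"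
    unfolding pi_variance_def by (rule sum.swap)
  finally have variance: "(\<Sum>i\<in>UNIV. p i * (norm (u i - (\<Sum>k\<in>UNIV. p k *\<^sub>R u k)))\<^sup>2)
      = (\<Sum>b\<in>Basis. pi_variance p (h b))" .
  have "(\<Sum>i\<in>UNIV. \<Sum>j\<in>UNIV. p i * A i j * (norm (u j - u i))\<^sup>2)
      = (\<Sum>i\<in>UNIV. \<Sum>j\<in>UNIV. \<Sum>b\<in>Basis. (h b i - h b j)\<^sup>2 * p i * A i j)"
    by (simp add: norm_sq h_def inner_diff_left sum_distrib_left sum_distrib_right power2_commute mult_ac)
  also have "\<dots> = (\<Sum>i\<in>UNIV. \<Sum>b\<in>Basis. \<Sum>j\<in>UNIV. (h b i - h b j)\<^sup>2 * p i * A i j)"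
    by (intro sum.cong refl sum.swap)
  also have "\<dots> = (\<Sum>b\<in>Basis. 2 * dirichlet_form A p (h b))"
    by (subst sum.swap) (simp add: dirichlet_form_def)
  finally have dirichlet: "(\<Sum>i\<in>UNIV. \<Sum>j\<in>UNIV. p i * A i j * (norm (u j - u i))\<^sup>2)
      = (\<Sum>b\<in>Basis. 2 * dirichlet_form A p (h b))" .
  have "2 * poincare_const A p * pi_variance p (h b) \<le> 2 * dirichlet_form A p (h b)" for b
    using poincare_const_mult_variance_le[OF A p, where h = "h b"] by simp
  then show ?thesis unfolding variance dirichlet sum_distrib_left by (rule sum_mono)
qed

locale cucker_smale =
  fixes A :: "'n::finite \<Rightarrow> 'n \<Rightarrow> real"
    and p :: "'n \<Rightarrow> real"
    and \<psi> :: "real \<Rightarrow> real"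
    and \<alpha> :: real
    and x v :: "real \<Rightarrow> 'n \<Rightarrow> 'a::euclidean_space"
  assumes alpha_pos: "\<alpha> > 0"
    and A_nonneg: "\<And>i j. A i j \<ge> 0"
    and psi_antimono: "antimono_on {0..} \<psi>"
    and psi_pos: "\<And>r. r \<ge> 0 \<Longrightarrow> 0 < \<psi> r"
    and p_nonneg: "\<And>i. p i \<ge> 0"
    and reversible: "\<And>i j. i \<noteq> j \<Longrightarrow> p i * A i j = p j * A j i"
    and dx: "\<And>i t. t \<ge> 0 \<Longrightarrow> ((\<lambda>s. x s i) has_vector_derivative v t i) (at t within {0..})"
    and dv: "\<And>i t. t \<ge> 0 \<Longrightarrow> ((\<lambda>s. v s i) has_vector_derivative
               (\<alpha> *\<^sub>R (\<Sum>j\<in>UNIV - {i}. (A i j * \<psi> (norm (x t j - x t i))) *\<^sub>R (v t j - v t i))))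
               (at t within {0..})"
begin

sublocale antimono_kernel \<psi>
  using psi_antimono psi_pos by unfold_locales (auto intro: less_imp_le)

definition "v_mean = (\<Sum>k\<in>UNIV. p k *\<^sub>R v 0 k)"

definition "force t i =
  \<alpha> *\<^sub>R (\<Sum>j\<in>UNIV - {i}. (A i j * \<psi> (norm (x t j - x t i))) *\<^sub>R (v t j - v t i))"

definition "weight t i j = p i * A i j * \<psi> (norm (x t j - x t i))"

definition "variance t = (\<Sum>i\<in>UNIV. p i * (norm (v t i - v_mean))\<^sup>2)"

definition "X t = diam_fam (x t)"

lemma weight_sym: "weight t i j = weight t j i"
  using reversible[of i j] by (cases "i = j") (simp_all add: weight_def norm_minus_commute)

lemma weight_nonneg: "0 \<le> weight t i j"
  using p_nonneg[of i] A_nonneg[of i j] psi_pos[of "norm (x t j - x t i)"] by (simp add: weight_def)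

lemma p_scaleR_force: "p i *\<^sub>R force t i = \<alpha> *\<^sub>R (\<Sum>j\<in>UNIV. weight t i j *\<^sub>R (v t j - v t i))"
proof -
  have "(\<Sum>j\<in>UNIV - {i}. (A i j * \<psi> (norm (x t j - x t i))) *\<^sub>R (v t j - v t i))
      = (\<Sum>j\<in>UNIV. (A i j * \<psi> (norm (x t j - x t i))) *\<^sub>R (v t j - v t i))"
    by (intro sum.mono_neutral_left) auto
  then show ?thesis by (simp add: force_def weight_def scaleR_sum_right mult_ac)
qed

lemma v_mean_conserved:
  assumes "t \<ge> 0"
  shows "(\<Sum>k\<in>UNIV. p k *\<^sub>R v t k) = v_mean"
proof -
  have "((\<lambda>s. \<Sum>k\<in>UNIV. p k *\<^sub>R v s k) has_vector_derivative 0) (at u within {0..})" if "u \<ge> 0" for u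
  proof -
    have "((\<lambda>s. \<Sum>k\<in>UNIV. p k *\<^sub>R v s k) has_vector_derivative (\<Sum>k\<in>UNIV. p k *\<^sub>R force u k))
            (at u within {0..})"
      using dv[OF that, folded force_def]
      by (intro has_vector_derivative_sum has_vector_derivative_scaleR[OF DERIV_const, simplified])
    moreover have "(\<Sum>k\<in>UNIV. p k *\<^sub>R force u k) = 0"
      using sum_symmetric_scaleR_diff_eq_0[of "weight u" "v u"] weight_sym
      by (simp add: p_scaleR_force flip: scaleR_sum_right)
    ultimately show ?thesis by simp
  qed
  then obtain c where "\<And>s. s \<in> {0..} \<Longrightarrow> (\<Sum>k\<in>UNIV. p k *\<^sub>R v s k) = c"
    by (rule has_vector_derivative_zero_constant[OF convex_real_interval(1)]) auto
  from this[of t] this[of 0] assms show ?thesis by (simp add: v_mean_def)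
qed

lemma variance_has_derivative:
  assumes "t \<ge> 0"
  shows "(variance has_real_derivative
           - \<alpha> * (\<Sum>i\<in>UNIV. \<Sum>j\<in>UNIV. weight t i j * (norm (v t j - v t i))\<^sup>2)) (at t within {0..})"
proof -
  define u where "u i = v t i - v_mean" for i
  have "((\<lambda>s. p i * ((v s i - v_mean) \<bullet> (v s i - v_mean))) has_real_derivative
          2 * (u i \<bullet> (p i *\<^sub>R force t i))) (at t within {0..})" for i
  proof -
    have "((\<lambda>s. v s i - v_mean) has_derivative (\<lambda>h. h *\<^sub>R force t i)) (at t within {0..})"
      using dv[OF assms, folded force_def] has_vector_derivative_diff[OF _ has_vector_derivative_const]
      unfolding has_vector_derivative_def by fastforce
    from has_derivative_inner[OF this this]
    have "((\<lambda>s. (v s i - v_mean) \<bullet> (v s i - v_mean)) has_derivative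
            (\<lambda>h. (v t i - v_mean) \<bullet> (h *\<^sub>R force t i) + (h *\<^sub>R force t i) \<bullet> (v t i - v_mean)))
            (at t within {0..})" .
    moreover have "(\<lambda>h. (v t i - v_mean) \<bullet> (h *\<^sub>R force t i) + (h *\<^sub>R force t i) \<bullet> (v t i - v_mean))
                 = (*) (2 * (u i \<bullet> force t i))"
      by (auto simp: fun_eq_iff u_def inner_commute)
    ultimately have "((\<lambda>s. (v s i - v_mean) \<bullet> (v s i - v_mean)) has_real_derivative 2 * (u i \<bullet> force t i))
            (at t within {0..})"
      by (simp add: has_field_derivative_def)
    from DERIV_cmult[OF this, of "p i"] show ?thesis by (rule DERIV_cong) simp
  qed
  then have "(variance has_real_derivative (\<Sum>i\<in>UNIV. 2 * (u i \<bullet> (p i *\<^sub>R force t i))))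
               (at t within {0..})"
    unfolding variance_def power2_norm_eq_inner by (intro DERIV_sum) auto
  moreover have "(\<Sum>i\<in>UNIV. 2 * (u i \<bullet> (p i *\<^sub>R force t i)))
      = 2 * \<alpha> * (\<Sum>i\<in>UNIV. \<Sum>j\<in>UNIV. weight t i j * (u i \<bullet> (u j - u i)))"
    by (simp add: p_scaleR_force inner_sum_right sum_distrib_left u_def mult_ac)
  moreover have "(\<Sum>i\<in>UNIV. \<Sum>j\<in>UNIV. weight t i j * (u i \<bullet> (u j - u i)))
      = - (1/2) * (\<Sum>i\<in>UNIV. \<Sum>j\<in>UNIV. weight t i j * (norm (v t j - v t i))\<^sup>2)"
    using sum_symmetric_inner_diff[of "weight t" u] weight_sym by (simp add: u_def)
  ultimately show ?thesis by simp
qed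

lemma variance_nonneg: "0 \<le> variance t"
  unfolding variance_def using p_nonneg by (auto intro!: sum_nonneg)

lemma variance_antimono:
  assumes "0 \<le> s" "s \<le> t"
  shows "variance t \<le> variance s"
proof (rule has_real_derivative_nonpos_imp_nonincreasing_atLeast[where f = variance])
  fix u assume "s \<le> u"
  with assms show "(variance has_real_derivative
      - \<alpha> * (\<Sum>i\<in>UNIV. \<Sum>j\<in>UNIV. weight u i j * (norm (v u j - v u i))\<^sup>2)) (at u within {s..})"
    by (intro DERIV_subset[OF variance_has_derivative]) auto
  show "- \<alpha> * (\<Sum>i\<in>UNIV. \<Sum>j\<in>UNIV. weight u i j * (norm (v u j - v u i))\<^sup>2) \<le> 0"
    using alpha_pos weight_nonneg by (simp add: sum_nonneg)
qed fact

lemma continuous_on_variance: "continuous_on {0..} variance"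
  using variance_has_derivative by (intro DERIV_continuous_on) auto

lemma X_nonneg: "0 \<le> X t"
  by (simp add: X_def diam_fam_nonneg)

lemma continuous_on_X: "continuous_on {0..} X"
  unfolding continuous_on_eq_continuous_within X_def
proof
  fix t :: real assume "t \<in> {0..}"
  then show "continuous (at t within {0..}) (\<lambda>s. diam_fam (x s))"
    using dx by (intro continuous_diam_fam has_vector_derivative_continuous) auto
qed

lemma variance_dissipation:
  assumes "t \<ge> 0" "X t \<le> R"
  shows "2 * poincare_const A p * \<psi> R * variance t
           \<le> (\<Sum>i\<in>UNIV. \<Sum>j\<in>UNIV. weight t i j * (norm (v t j - v t i))\<^sup>2)"
proof -
  have R: "0 \<le> R" using assms(2) X_nonneg[of t] by linarith
  have "\<psi> R * (2 * poincare_const A p * variance t)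
      \<le> \<psi> R * (\<Sum>i\<in>UNIV. \<Sum>j\<in>UNIV. p i * A i j * (norm (v t j - v t i))\<^sup>2)"
    using poincare_inequality_euclidean[where A = A and p = p and u = "v t", OF A_nonneg p_nonneg] psi_pos[OF R]
    by (intro mult_left_mono) (auto simp: variance_def v_mean_conserved[OF assms(1)])
  also have "\<dots> \<le> (\<Sum>i\<in>UNIV. \<Sum>j\<in>UNIV. weight t i j * (norm (v t j - v t i))\<^sup>2)"
    unfolding sum_distrib_left
  proof (intro sum_mono)
    fix i j
    have "\<psi> R \<le> \<psi> (norm (x t j - x t i))"
      using norm_le_diam_fam[of "x t" j i] assms(2) by (intro antimonoD) (auto simp: X_def)
    then have "\<psi> R * (p i * A i j * (norm (v t j - v t i))\<^sup>2)
        \<le> \<psi> (norm (x t j - x t i)) * (p i * A i j * (norm (v t j - v t i))\<^sup>2)"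
      using p_nonneg[of i] A_nonneg[of i j] by (intro mult_right_mono) auto
    then show "\<psi> R * (p i * A i j * (norm (v t j - v t i))\<^sup>2) \<le> weight t i j * (norm (v t j - v t i))\<^sup>2"
      by (simp add: weight_def mult_ac)
  qed
  finally show ?thesis by (simp add: mult_ac)
qed

lemma X_at_right_le:
  assumes "t \<ge> 0" "e > 0"
  shows "eventually (\<lambda>s. X s \<le> X t + (s - t) * (diam_fam (v t) + e)) (at_right t)"
proof -
  have pair: "eventually (\<lambda>s. norm ((x s i - x s j) - (x t i - x t j)) \<le> (s - t) * (diam_fam (v t) + e))
                (at_right t)" for i j
  proof (rule has_vector_derivative_at_right_norm_le[where f = "\<lambda>s. x s i - x s j"])
    show "((\<lambda>s. x s i - x s j) has_vector_derivative v t i - v t j) (at_right t)"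
      using has_vector_derivative_diff[OF dx dx, OF assms(1) assms(1)]
      by (rule has_vector_derivative_within_subset) (use assms in auto)
    show "norm (v t i - v t j) < diam_fam (v t) + e"
      using norm_le_diam_fam[of "v t" i j] assms(2) by linarith
  qed
  have "eventually (\<lambda>s. \<forall>i j. norm ((x s i - x s j) - (x t i - x t j)) \<le> (s - t) * (diam_fam (v t) + e))
          (at_right t)"
    by (intro eventually_all_finite pair)
  then show ?thesis
  proof eventually_elim
    case (elim s)
    show ?case unfolding X_def diam_fam_le_iff
    proof (intro allI)
      fix i j
      have "norm (x s i - x s j) \<le> norm (x t i - x t j) + norm ((x s i - x s j) - (x t i - x t j))"
        by (rule norm_triangle_sub)
      also have "\<dots> \<le> diam_fam (x t) + (s - t) * (diam_fam (v t) + e)"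
        using elim norm_le_diam_fam[of "x t" i j] by (intro add_mono) auto
      finally show "norm (x s i - x s j) \<le> diam_fam (x t) + (s - t) * (diam_fam (v t) + e)" .
    qed
  qed
qed

end

locale cucker_smale_coercive = cucker_smale +
  assumes poincare_pos: "poincare_const A p > 0"
    and p_min_pos: "Min (range p) > 0"
begin

lemma norm_v_sub_v_mean_le: "norm (v t i - v_mean) \<le> sqrt (variance t / Min (range p))"
proof (rule real_le_rsqrt)
  have "Min (range p) * (norm (v t i - v_mean))\<^sup>2 \<le> p i * (norm (v t i - v_mean))\<^sup>2"
    by (intro mult_right_mono) auto
  also have "\<dots> \<le> variance t"
    unfolding variance_def using p_nonneg by (intro member_le_sum) auto
  finally show "(norm (v t i - v_mean))\<^sup>2 \<le> variance t / Min (range p)"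
    using p_min_pos by (simp add: field_simps)
qed

lemma diam_fam_v_le: "diam_fam (v t) \<le> 2 * sqrt (variance t / Min (range p))"
  unfolding diam_fam_le_iff
proof (intro allI)
  fix i j
  show "norm (v t i - v t j) \<le> 2 * sqrt (variance t / Min (range p))"
    using norm_triangle_ineq4[of "v t i - v_mean" "v t j - v_mean"]
      norm_v_sub_v_mean_le[of t i] norm_v_sub_v_mean_le[of t j] by simp
qed

definition "C = \<alpha> * poincare_const A p * sqrt (Min (range p)) / 2"

definition "lyapunov t = sqrt (variance t) + C * primitive \<psi> (X 0) (X t)"

lemma C_pos: "C > 0"
  using alpha_pos poincare_pos p_min_pos by (simp add: C_def)

lemma sqrt_variance_at_right_le:
  assumes "t \<ge> 0" "e > 0"
  shows "eventually (\<lambda>s. sqrt (variance s) \<le> sqrt (variance t)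
           + (s - t) * (e - \<alpha> * poincare_const A p * \<psi> (X t) * sqrt (variance t))) (at_right t)"
proof (cases "variance t = 0")
  case True
  have "variance s = 0" if "t < s" for s
    using variance_antimono[of t s] variance_nonneg[of s] True assms that by simp
  with eventually_at_right_less[of t] show ?thesis
    by (elim eventually_mono) (use True assms in simp)
next
  case False
  then have pos: "variance t > 0" using variance_nonneg[of t] by simp
  define S where "S = (\<Sum>i\<in>UNIV. \<Sum>j\<in>UNIV. weight t i j * (norm (v t j - v t i))\<^sup>2)"
  have "(variance has_real_derivative - \<alpha> * S) (at_right t)"
    using variance_has_derivative[OF assms(1)] unfolding S_def
    by (rule DERIV_subset) (use assms in auto)
  from DERIV_chain2[OF DERIV_real_sqrt[OF pos] this]
  have deriv: "((\<lambda>s. sqrt (variance s)) has_real_derivative inverse (sqrt (variance t)) / 2 * (- \<alpha> * S))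
                 (at_right t)" .
  have "2 * poincare_const A p * \<psi> (X t) * variance t \<le> S"
    using variance_dissipation[OF assms(1) order_refl] by (simp add: S_def)
  then have "\<alpha> * (2 * poincare_const A p * \<psi> (X t) * variance t) \<le> \<alpha> * S"
    using alpha_pos by (intro mult_left_mono) auto
  then have "inverse (sqrt (variance t)) / 2 * (- \<alpha> * S)
      \<le> - (\<alpha> * poincare_const A p * \<psi> (X t) * sqrt (variance t))"
    using pos by (simp add: field_simps real_sqrt_mult_self flip: real_sqrt_mult)
  with assms(2) have "inverse (sqrt (variance t)) / 2 * (- \<alpha> * S)
      < e - \<alpha> * poincare_const A p * \<psi> (X t) * sqrt (variance t)"
    by linarith
  with deriv show ?thesis by (rule has_real_derivative_at_right_le)
qed

lemma C_mult_diam_fam_v_le: "C * diam_fam (v t) \<le> \<alpha> * poincare_const A p * sqrt (variance t)"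
proof -
  have "\<alpha> * poincare_const A p * sqrt m / 2 * (2 * sqrt (variance t / m))
      = \<alpha> * poincare_const A p * sqrt (variance t)" if "m > 0" for m
    using that by (simp add: real_sqrt_divide)
  with p_min_pos have "C * (2 * sqrt (variance t / Min (range p))) = \<alpha> * poincare_const A p * sqrt (variance t)"
    by (simp add: C_def)
  with diam_fam_v_le[of t] C_pos show ?thesis
    by (metis mult_left_mono less_imp_le)
qed

lemma C_mult_primitive_X_at_right_le:
  assumes "t \<ge> 0" "e > 0"
  shows "eventually (\<lambda>s. C * primitive \<psi> (X 0) (X s) \<le> C * primitive \<psi> (X 0) (X t)
           + (s - t) * (\<alpha> * poincare_const A p * \<psi> (X t) * sqrt (variance t) + e)) (at_right t)"
proof -
  define ps where "ps = \<psi> (X t)"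
  define e' where "e' = e / (C * ps + 1)"
  have Cps: "0 \<le> C * ps" using C_pos psi_pos[OF X_nonneg[of t]] by (simp add: ps_def)
  have e'_pos: "e' > 0" using assms(2) Cps by (simp add: e'_def)
  have "C * ps * e' = e * (C * ps / (C * ps + 1))"
    using Cps by (simp add: e'_def field_simps)
  also have "\<dots> \<le> e * 1" using assms(2) Cps by (intro mult_left_mono) simp_all
  finally have Cps_e': "C * ps * e' \<le> e" by simp
  from X_at_right_le[OF assms(1) e'_pos] eventually_at_right_less[of t]
  show ?thesis
  proof eventually_elim
    case (elim s)
    have "0 \<le> (s - t) * (diam_fam (v t) + e')"
      using elim(2) e'_pos diam_fam_nonneg[of "v t"] by (intro mult_nonneg_nonneg) auto
    with elim(1) have "max 0 (X s - X t) \<le> (s - t) * (diam_fam (v t) + e')" by simp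
    then have "primitive \<psi> (X 0) (X s) \<le> primitive \<psi> (X 0) (X t) + ps * ((s - t) * (diam_fam (v t) + e'))"
      using primitive_le_add_max[where a = "X 0" and b = "X t" and c = "X s", OF X_nonneg X_nonneg]
        psi_pos[OF X_nonneg[of t]]
      unfolding ps_def by (meson add_left_mono mult_left_mono order_trans less_imp_le)
    then have "C * primitive \<psi> (X 0) (X s)
        \<le> C * (primitive \<psi> (X 0) (X t) + ps * ((s - t) * (diam_fam (v t) + e')))"
      using C_pos by (intro mult_left_mono) auto
    also have "\<dots> = C * primitive \<psi> (X 0) (X t) + (s - t) * (ps * (C * diam_fam (v t)) + C * ps * e')"
      by (simp add: algebra_simps)
    also have "\<dots> \<le> C * primitive \<psi> (X 0) (X t)
        + (s - t) * (ps * (\<alpha> * poincare_const A p * sqrt (variance t)) + e)"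
      using elim(2) Cps_e' C_mult_diam_fam_v_le[of t] psi_pos[OF X_nonneg[of t]]
      by (intro add_left_mono mult_left_mono add_mono) (auto simp: ps_def)
    finally show ?case by (simp add: ps_def mult_ac)
  qed
qed

lemma lyapunov_at_right_le:
  assumes "t \<ge> 0" "e > 0"
  shows "eventually (\<lambda>s. lyapunov s \<le> lyapunov t + e * (s - t)) (at_right t)"
  using sqrt_variance_at_right_le[OF assms(1) half_gt_zero[OF assms(2)]]
    C_mult_primitive_X_at_right_le[OF assms(1) half_gt_zero[OF assms(2)]]
proof eventually_elim
  case (elim s)
  have "(s - t) * (e / 2 - \<alpha> * poincare_const A p * \<psi> (X t) * sqrt (variance t))
      + (s - t) * (\<alpha> * poincare_const A p * \<psi> (X t) * sqrt (variance t) + e / 2) = e * (s - t)"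
    by (simp add: algebra_simps)
  with elim show ?case unfolding lyapunov_def by linarith
qed

lemma lyapunov_le:
  assumes "t \<ge> 0"
  shows "lyapunov t \<le> sqrt (variance 0)"
proof -
  have "continuous_on {0..} (\<lambda>t. primitive \<psi> (X 0) (X t))"
    using continuous_on_compose2[OF continuous_on_primitive[OF X_nonneg] continuous_on_X] by simp
  then have "continuous_on {0..} lyapunov"
    unfolding lyapunov_def using continuous_on_variance by (intro continuous_intros) auto
  then have "continuous_on {0..t} lyapunov"
    by (rule continuous_on_subset) auto
  then have "lyapunov t \<le> lyapunov 0"
    using lyapunov_at_right_le by (intro right_dini_nonpos_imp_nonincreasing[OF assms]) auto
  then show ?thesis by (simp add: lyapunov_def primitive_base)
qed

lemma X_bounded:
  assumes "ennreal (sqrt (variance 0)) < ennreal C * (\<integral>\<^sup>+ r \<in> {X 0..}. ennreal (\<psi> r) \<partial>lborel)"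
  obtains R where "\<And>t. t \<ge> 0 \<Longrightarrow> X t \<le> R"
proof -
  from assms obtain n :: nat
    where "ennreal (sqrt (variance 0)) < ennreal C * ennreal (primitive \<psi> (X 0) (X 0 + real n))"
    by (auto simp: nn_integral_atLeast_eq_SUP_primitive[OF X_nonneg] SUP_mult_left_ennreal less_SUP_iff)
  then have less: "sqrt (variance 0) < C * primitive \<psi> (X 0) (X 0 + real n)"
    using C_pos primitive_nonneg
    by (simp add: ennreal_less_iff[OF real_sqrt_ge_zero[OF variance_nonneg]] flip: ennreal_mult)
  have "X t \<le> X 0 + real n" if "t \<ge> 0" for t
  proof (rule ccontr)
    assume "\<not> X t \<le> X 0 + real n"
    then have "C * primitive \<psi> (X 0) (X 0 + real n) \<le> C * primitive \<psi> (X 0) (X t)"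
      using C_pos by (intro mult_left_mono primitive_mono X_nonneg) auto
    also have "\<dots> \<le> lyapunov t" by (simp add: lyapunov_def variance_nonneg)
    also have "\<dots> \<le> sqrt (variance 0)" using that by (rule lyapunov_le)
    finally show False using less by simp
  qed
  then show ?thesis by (rule that)
qed

lemma variance_le_exp:
  assumes R: "\<And>t. t \<ge> 0 \<Longrightarrow> X t \<le> R" and "t \<ge> 0"
  shows "variance t \<le> variance 0 * exp (- (2 * \<alpha> * poincare_const A p * \<psi> R) * t)"
proof -
  define k where "k = 2 * \<alpha> * poincare_const A p * \<psi> R"
  define S where "S u = (\<Sum>i\<in>UNIV. \<Sum>j\<in>UNIV. weight u i j * (norm (v u j - v u i))\<^sup>2)" for u
  have "variance t * exp (k * t) \<le> variance 0 * exp (k * 0)"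
  proof (rule has_real_derivative_nonpos_imp_nonincreasing_atLeast[where f = "\<lambda>t. variance t * exp (k * t)"])
    fix u :: real assume u: "0 \<le> u"
    show "((\<lambda>t. variance t * exp (k * t)) has_real_derivative
            - \<alpha> * S u * exp (k * u) + exp (k * u) * k * variance u) (at u within {0..})"
      using variance_has_derivative[OF u] unfolding S_def
      by (auto intro!: derivative_eq_intros)
    have "k * variance u \<le> \<alpha> * S u"
      using variance_dissipation[OF u R[OF u]] alpha_pos
      by (auto simp: k_def S_def mult_ac intro: order_trans mult_left_mono)
    then show "- \<alpha> * S u * exp (k * u) + exp (k * u) * k * variance u \<le> 0"
      by (simp add: algebra_simps mult_left_mono)
  qed (use assms in auto)
  then have "variance t * exp (k * t) * exp (- k * t) \<le> variance 0 * exp (- k * t)"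
    by (intro mult_right_mono) auto
  then show ?thesis by (simp add: k_def mult.assoc flip: exp_add)
qed

lemma variance_tendsto_0:
  assumes R: "\<And>t. t \<ge> 0 \<Longrightarrow> X t \<le> R"
  shows "(variance \<longlongrightarrow> 0) at_top"
proof -
  define k where "k = 2 * \<alpha> * poincare_const A p * \<psi> R"
  have "k > 0" using alpha_pos poincare_pos psi_pos[of R] R[of 0] X_nonneg[of 0] by (simp add: k_def)
  then have "filterlim (\<lambda>t. k * t) at_top at_top"
    by (rule filterlim_tendsto_pos_mult_at_top[OF tendsto_const _ filterlim_ident])
  then have "filterlim (\<lambda>t. - k * t) at_bot at_top"
    by (simp add: filterlim_uminus_at_bot)
  from filterlim_compose[OF exp_at_bot this]
  have exp_lim: "((\<lambda>t. variance 0 * exp (- k * t)) \<longlongrightarrow> 0) at_top"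
    by (rule tendsto_mult_right_zero)
  have below_exp: "eventually (\<lambda>t. variance t \<le> variance 0 * exp (- k * t)) at_top"
    using eventually_ge_at_top[of 0] by eventually_elim (unfold k_def, rule variance_le_exp[OF R])
  show ?thesis
    by (rule tendsto_sandwich[OF always_eventually below_exp tendsto_const exp_lim]) (simp add: variance_nonneg)
qed

lemma flocking:
  assumes R: "\<And>t. t \<ge> 0 \<Longrightarrow> X t \<le> R"
  shows "((\<lambda>t. diam_fam (v t)) \<longlongrightarrow> 0) at_top" and "((\<lambda>t. v t i) \<longlongrightarrow> v_mean) at_top"
proof -
  have "((\<lambda>t. variance t / Min (range p)) \<longlongrightarrow> 0) at_top"
    using variance_tendsto_0[OF R] by (rule tendsto_divide_zero)
  from tendsto_real_sqrt[OF this]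
  have bound: "((\<lambda>t. sqrt (variance t / Min (range p))) \<longlongrightarrow> 0) at_top" by simp
  show "((\<lambda>t. diam_fam (v t)) \<longlongrightarrow> 0) at_top"
  proof (rule tendsto_sandwich[OF always_eventually always_eventually tendsto_const])
    show "((\<lambda>t. 2 * sqrt (variance t / Min (range p))) \<longlongrightarrow> 0) at_top"
      using tendsto_mult_right_zero[OF bound] .
  qed (simp_all add: diam_fam_nonneg diam_fam_v_le)
  have "((\<lambda>t. norm (v t i - v_mean)) \<longlongrightarrow> 0) at_top"
    by (rule tendsto_sandwich[OF always_eventually always_eventually tendsto_const bound])
      (simp_all add: norm_v_sub_v_mean_le)
  then show "((\<lambda>t. v t i) \<longlongrightarrow> v_mean) at_top"
    by (simp add: tendsto_norm_zero_iff LIM_zero_iff)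
qed

end

theorem theorem3p2:
  fixes A :: "'n::finite \<Rightarrow> 'n \<Rightarrow> real"
    and p :: "'n \<Rightarrow> real"
    and \<psi> :: "real \<Rightarrow> real"
    and \<alpha> :: real
    and x v :: "real \<Rightarrow> 'n \<Rightarrow> real ^ 'd::finite"
  assumes alpha_pos: "\<alpha> > 0"
    and A_nonneg: "\<And>i j. A i j \<ge> 0"
    and psi_mono: "\<And>r1 r2. r1 \<ge> 0 \<Longrightarrow> r2 \<ge> 0 \<Longrightarrow> (r1 - r2) * (\<psi> r1 - \<psi> r2) \<le> 0"
    and psi_bounds: "\<And>r. r \<ge> 0 \<Longrightarrow> 0 < \<psi> r \<and> \<psi> r \<le> \<psi> 0 \<and> \<psi> 0 \<le> 1"
    and irred: "irreducible_graph A"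
    and p_nonneg: "\<And>i. p i \<ge> 0"
    and p_sum: "(\<Sum>i\<in>UNIV. p i) = 1"
    and reversible: "\<And>i j. i \<noteq> j \<Longrightarrow> p i * A i j = p j * A j i"
    and dx: "\<And>i t. t \<ge> 0 \<Longrightarrow> ((\<lambda>s. x s i) has_vector_derivative v t i) (at t within {0..})"
    and dv: "\<And>i t. t \<ge> 0 \<Longrightarrow> ((\<lambda>s. v s i) has_vector_derivative
               (\<alpha> *\<^sub>R (\<Sum>j\<in>UNIV - {i}. (A i j * \<psi> (norm (x t j - x t i))) *\<^sub>R (v t j - v t i))))
               (at t within {0..})"
    and small: "ennreal (sqrt (\<Sum>i\<in>UNIV. p i * (norm (v 0 i - (\<Sum>k\<in>UNIV. p k *\<^sub>R v 0 k)))\<^sup>2))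
               < ennreal (\<alpha> * poincare_const A p * sqrt (Min (range p)) / 2)
                 * (\<integral>\<^sup>+ r \<in> {diam_fam (x 0)..}. ennreal (\<psi> r) \<partial>lborel)"
  shows "(\<exists>B. \<forall>t\<ge>0. diam_fam (x t) \<le> B)
    \<and> ((\<lambda>t. diam_fam (v t)) \<longlongrightarrow> 0) at_top
    \<and> (\<forall>i. ((\<lambda>t. v t i) \<longlongrightarrow> (\<Sum>k\<in>UNIV. p k *\<^sub>R v 0 k)) at_top)"
proof -
  interpret cucker_smale A p \<psi> \<alpha> x v
    using alpha_pos A_nonneg antimono_on_if_diff_mult_diff_nonpos[OF psi_mono] psi_bounds
      p_nonneg reversible dx dv
    by unfold_locales auto
  have "0 < \<alpha> * poincare_const A p * sqrt (Min (range p))"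
  proof (rule ccontr)
    assume "\<not> ?thesis"
    then have "ennreal (\<alpha> * poincare_const A p * sqrt (Min (range p)) / 2) = 0"
      by (simp add: ennreal_eq_0_iff)
    with small show False by simp
  qed
  moreover have "0 \<le> Min (range p)" by (simp add: p_nonneg)
  ultimately have "poincare_const A p > 0" "Min (range p) > 0"
    using alpha_pos by (auto simp: zero_less_mult_iff)
  then interpret cucker_smale_coercive A p \<psi> \<alpha> x v
    by unfold_locales
  have "ennreal (sqrt (variance 0)) < ennreal C * (\<integral>\<^sup>+ r \<in> {X 0..}. ennreal (\<psi> r) \<partial>lborel)"
    using small unfolding variance_def v_mean_def C_def X_def .
  then obtain R where R: "\<And>t. t \<ge> 0 \<Longrightarrow> X t \<le> R"
    by (rule X_bounded) blast
  then show ?thesis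
    using flocking[OF R] unfolding X_def v_mean_def by blast
qed

end
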